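(* Assume $\tau_1+\tau_2=1$, parametrize $\tau_2=\frac12(1+\nu_1-\nu_2)$, $\tau_3=\nu_1\nu_2+\frac{(\alpha+\beta)(\nu_1+\nu_2-1)}{2}$, and assume $\alpha+\nu_1+\nu_2\notin\mathbb Z$. Set $\widetilde\alpha=-\alpha-\beta-\nu_1-\nu_2$, $\widetilde\beta=\beta$ and, for $n\ge0$, $\psi_n(x)=x^{\nu_2-1}\widehat P_n^{(\widetilde\alpha,\widetilde\beta)}(1/x)$ on $x\in(0,1)$. Then (i) $M\psi_n=\widetilde\lambda_n\psi_n$ with $\widetilde\lambda_n=n(n-1)+(2-\nu_1-\nu_2-\alpha)n+\tau_0+\nu_1\nu_2+\tfrac12(\alpha-1)(\nu_1+\nu_2-1)$; (ii) $L$ acts tridiagonally on $\{\psi_n\}$: for every $n\ge0$ there are constants $\xi_n,\eta_n,\zeta_n$ with $L\psi_n=\xi_n\psi_{n+1}+\eta_n\psi_n+\zeta_n\psi_{n-1}$ (where $\psi_{-1}:=0$).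
   Context: $L=x(1-x)\partial_x^2+\big(\alpha+1-(\alpha+\beta+2)x\big)\partial_x$ with real $\alpha,\beta$, $X$ is multiplication by $x$, and $M=\tau_1XL+\tau_2LX+\tau_3X+\tau_0$ with real $\tau_i$. For parameters $a,b$ with $a+b\notin\mathbb Z$, the monic Jacobi polynomial is $\widehat P_n^{(a,b)}(t)=\frac{(-1)^n(a+1)_n}{(n+a+b+1)_n}{}_2F_1(-n,n+a+b+1;a+1;t)$, where $(c)_n=c(c+1)\cdots(c+n-1)$; it is the monic degree-$n$ eigenpolynomial of $t(1-t)\partial_t^2+(a+1-(a+b+2)t)\partial_t$ with eigenvalue $-n(n+a+b+1)$. *)

theory Defs
  imports "HOL-Analysis.Analysis"
begin

definition Lop :: "real \<Rightarrow> real \<Rightarrow> (real \<Rightarrow> real) \<Rightarrow> real \<Rightarrow> real" where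
  "Lop \<alpha> \<beta> f x = x * (1 - x) * deriv (deriv f) x + (\<alpha> + 1 - (\<alpha> + \<beta> + 2) * x) * deriv f x"

definition Mop :: "real \<Rightarrow> real \<Rightarrow> real \<Rightarrow> real \<Rightarrow> real \<Rightarrow> real \<Rightarrow> (real \<Rightarrow> real) \<Rightarrow> real \<Rightarrow> real" where
  "Mop \<alpha> \<beta> \<tau>0 \<tau>1 \<tau>2 \<tau>3 f x =
     \<tau>1 * (x * Lop \<alpha> \<beta> f x) + \<tau>2 * Lop \<alpha> \<beta> (\<lambda>y. y * f y) x + \<tau>3 * (x * f x) + \<tau>0 * f x"

text \<open>Monic Jacobi polynomial
  (-1)^n (a+1)_n / (n+a+b+1)_n * 2F1(-n, n+a+b+1; a+1; t), with the terminating 2F1 written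
  as a finite sum and the factor (a+1)_n/(a+1)_k written as (a+k+1)_(n-k).\<close>
definition jacobi_monic :: "real \<Rightarrow> real \<Rightarrow> nat \<Rightarrow> real \<Rightarrow> real" where
  "jacobi_monic a b n t =
     (\<Sum>k\<le>n. (-1) ^ n * pochhammer (a + real k + 1) (n - k)
              * pochhammer (- real n) k * pochhammer (real n + a + b + 1) k
              / (pochhammer (real n + a + b + 1) n * fact k) * t ^ k)"

end

theory Submission
  imports Defs "HOL-Computational_Algebra.Polynomial"
begin

text \<open>
  Under \<open>t = 1/x\<close>, differentiation maps \<open>x powr s * p(1/x)\<close>, \<open>p\<close> a polynomial, to
  \<open>x powr (s - 1) * q(1/x)\<close> with \<open>q = s p - t p'\<close>, so \<open>L\<close> and \<open>M\<close> act on such functions through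
  operators on polynomials in \<open>t\<close>. For \<open>s = \<nu>2 - 1\<close> and the given \<open>\<tau>\<^sub>i\<close>, the operator induced
  by \<open>M\<close> is \<open>t (c - J)\<close>, with \<open>J\<close> the Jacobi operator for \<open>(\<alpha>', \<beta>) = (-\<alpha>-\<beta>-\<nu>1-\<nu>2, \<beta>)\<close>,
  of which \<open>P\<^sub>n\<close> is an eigenpolynomial; this gives (i). The operator induced by \<open>L\<close> is a
  combination of \<open>tJ\<close>, \<open>Jt\<close>, \<open>t\<close> and \<open>1\<close>, so (ii) reduces to the three-term recurrence
  \<open>t P\<^sub>n \<in> span (P\<^sub>n\<^sub>+\<^sub>1, P\<^sub>n, P\<^sub>n\<^sub>-\<^sub>1)\<close>. No orthogonality is available for these parameters;
  instead, a quadratic polynomial \<open>Q\<^sub>n\<close> in \<open>J\<close> kills \<open>P\<^sub>n\<^sub>+\<^sub>1\<close> and \<open>P\<^sub>n\<^sub>-\<^sub>1\<close>, maps \<open>t P\<^sub>n\<close> to a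
  multiple of \<open>P\<^sub>n\<close> (a double commutator identity for \<open>J\<close> and \<open>t\<close>), and is injective on
  polynomials of degree at most \<open>n - 2\<close> because \<open>\<alpha>' + \<beta> \<notin> \<int>\<close>. Removing from \<open>t P\<^sub>n\<close> its
  components along \<open>P\<^sub>n\<^sub>+\<^sub>1, P\<^sub>n, P\<^sub>n\<^sub>-\<^sub>1\<close> leaves a polynomial of degree at most \<open>n - 2\<close>, which
  \<open>Q\<^sub>n\<close> sends to a multiple of \<open>P\<^sub>n\<close> of degree below \<open>n\<close>, i.e. to zero; so the remainder is zero.
\<close>

definition inversion_deriv :: "real \<Rightarrow> real poly \<Rightarrow> real poly" where
  "inversion_deriv s p = smult s p - [:0, 1:] * pderiv p"

lemma deriv_powr_poly_inverse:
  assumes f: "\<And>y. y > 0 \<Longrightarrow> f y = y powr s * poly p (1 / y)" and x: "x > 0"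
  shows "deriv f x = x powr (s - 1) * poly (inversion_deriv s p) (1 / x)"
proof -
  define D where "D = s * x powr (s - 1) * poly p (1 / x) + x powr s * (poly (pderiv p) (1 / x) * (- 1 / x\<^sup>2))"
  have "((\<lambda>y. y powr s * poly p (1 / y)) has_real_derivative D) (at x)"
    unfolding D_def using x
    by (auto intro!: derivative_eq_intros DERIV_chain2[OF poly_DERIV] simp: power2_eq_square)
  then have "(f has_real_derivative D) (at x)"
    by (rule has_field_derivative_transform_within_open[of _ _ _ "{0<..}"]) (use x f in auto)
  then have "deriv f x = D"
    by (rule DERIV_imp_deriv)
  also have "\<dots> = x powr (s - 1) * poly (inversion_deriv s p) (1 / x)"
    using x by (simp add: D_def inversion_deriv_def powr_diff field_simps power2_eq_square)
  finally show ?thesis .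
qed

definition inversion_Lop :: "real \<Rightarrow> real \<Rightarrow> real \<Rightarrow> real poly \<Rightarrow> real poly" where
  "inversion_Lop \<alpha> \<beta> s p = [:-1, 1:] * inversion_deriv (s - 1) (inversion_deriv s p)
     + [:-(\<alpha> + \<beta> + 2), \<alpha> + 1:] * inversion_deriv s p"

lemma Lop_powr_poly_inverse:
  assumes f: "\<And>y. y > 0 \<Longrightarrow> f y = y powr s * poly p (1 / y)" and x: "x > 0"
  shows "Lop \<alpha> \<beta> f x = x powr s * poly (inversion_Lop \<alpha> \<beta> s p) (1 / x)"
proof -
  have "\<And>y. y > 0 \<Longrightarrow> deriv f y = y powr (s - 1) * poly (inversion_deriv s p) (1 / y)"
    using deriv_powr_poly_inverse[OF f] by blast
  from deriv_powr_poly_inverse[OF this x] deriv_powr_poly_inverse[OF f x]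
  have "deriv (deriv f) x = x powr s / x\<^sup>2 * poly (inversion_deriv (s - 1) (inversion_deriv s p)) (1 / x)"
    and "deriv f x = x powr s / x * poly (inversion_deriv s p) (1 / x)"
    using x by (simp_all add: powr_diff power2_eq_square)
  then show ?thesis
    unfolding Lop_def inversion_Lop_def using x by (simp add: field_simps power2_eq_square)
qed

definition inversion_Mop ::
    "real \<Rightarrow> real \<Rightarrow> real \<Rightarrow> real \<Rightarrow> real \<Rightarrow> real \<Rightarrow> real \<Rightarrow> real poly \<Rightarrow> real poly" where
  "inversion_Mop \<alpha> \<beta> \<tau>0 \<tau>1 \<tau>2 \<tau>3 s p = smult \<tau>1 (inversion_Lop \<alpha> \<beta> s p)
     + smult \<tau>2 (inversion_Lop \<alpha> \<beta> (s + 1) p) + smult \<tau>3 p + smult \<tau>0 ([:0, 1:] * p)"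

lemma Mop_powr_poly_inverse:
  assumes f: "\<And>y. y > 0 \<Longrightarrow> f y = y powr s * poly p (1 / y)" and x: "x > 0"
  shows "Mop \<alpha> \<beta> \<tau>0 \<tau>1 \<tau>2 \<tau>3 f x = x powr (s + 1) * poly (inversion_Mop \<alpha> \<beta> \<tau>0 \<tau>1 \<tau>2 \<tau>3 s p) (1 / x)"
proof -
  have "Lop \<alpha> \<beta> (\<lambda>y. y * f y) x = x powr (s + 1) * poly (inversion_Lop \<alpha> \<beta> (s + 1) p) (1 / x)"
    by (rule Lop_powr_poly_inverse) (use x f in \<open>simp_all add: powr_add\<close>)
  moreover have "Lop \<alpha> \<beta> f x = x powr s * poly (inversion_Lop \<alpha> \<beta> s p) (1 / x)"
    by (rule Lop_powr_poly_inverse[OF f x])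
  ultimately show ?thesis
    unfolding Mop_def inversion_Mop_def f[OF x] using x by (simp add: powr_add field_simps)
qed

definition jacobi_op :: "real \<Rightarrow> real \<Rightarrow> real poly \<Rightarrow> real poly" where
  "jacobi_op a b p = [:0, 1, -1:] * pderiv (pderiv p) + [:a + 1, -(a + b + 2):] * pderiv p"

definition jacobi_eigenvalue :: "real \<Rightarrow> real \<Rightarrow> nat \<Rightarrow> real" where
  "jacobi_eigenvalue a b n = - (real n * (real n + a + b + 1))"

lemmas pderiv_simps = pderiv_mult pderiv_add pderiv_smult pderiv_diff pderiv_minus pderiv_pCons

lemma jacobi_op_linear:
  "jacobi_op a b (p + q) = jacobi_op a b p + jacobi_op a b q"
  "jacobi_op a b (p - q) = jacobi_op a b p - jacobi_op a b q"
  "jacobi_op a b (smult c p) = smult c (jacobi_op a b p)"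
  "jacobi_op a b 0 = 0"
  by (intro poly_eq_poly_eq_iff[THEN iffD1] ext; simp add: jacobi_op_def pderiv_simps algebra_simps)+

lemma coeff_jacobi_op:
  "coeff (jacobi_op a b p) k
     = real (Suc k) * (real (Suc k) + a) * coeff p (Suc k) + jacobi_eigenvalue a b k * coeff p k"
  by (cases k; cases "k - 1")
     (simp_all add: jacobi_op_def jacobi_eigenvalue_def coeff_pderiv algebra_simps)

lemma coeff_jacobi_op_eq_0:
  assumes "\<forall>j\<ge>m. coeff p j = 0"
  shows "\<forall>j\<ge>m. coeff (jacobi_op a b p) j = 0"
  using assms by (simp add: coeff_jacobi_op)

lemma coeff_jacobi_op_top:
  assumes "coeff p (Suc d) = 0"
  shows "coeff (jacobi_op a b p) d = jacobi_eigenvalue a b d * coeff p d"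
  using assms by (simp add: coeff_jacobi_op)

lemma jacobi_op_double_commutator:
  "jacobi_op a b (jacobi_op a b ([:0, 1:] * p)) - smult 2 (jacobi_op a b ([:0, 1:] * jacobi_op a b p))
     + [:0, 1:] * jacobi_op a b (jacobi_op a b p)
   = smult (-2) (jacobi_op a b ([:0, 1:] * p) + [:0, 1:] * jacobi_op a b p)
     + smult ((a + b + 1)\<^sup>2 - 1) ([:0, 1:] * p) + smult 2 (jacobi_op a b p) - smult ((a + 1) * (a + b)) p"
  by (intro poly_eq_poly_eq_iff[THEN iffD1] ext)
     (simp add: jacobi_op_def pderiv_simps algebra_simps power2_eq_square)

definition jacobi_coeff :: "real \<Rightarrow> real \<Rightarrow> nat \<Rightarrow> nat \<Rightarrow> real" where
  "jacobi_coeff a b n k = (-1) ^ n * pochhammer (a + real k + 1) (n - k)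
     * pochhammer (- real n) k * pochhammer (real n + a + b + 1) k
     / (pochhammer (real n + a + b + 1) n * fact k)"

definition jacobi_poly :: "real \<Rightarrow> real \<Rightarrow> nat \<Rightarrow> real poly" where
  "jacobi_poly a b n = (\<Sum>k\<le>n. monom (jacobi_coeff a b n k) k)"

lemma poly_jacobi_poly: "poly (jacobi_poly a b n) t = jacobi_monic a b n t"
  by (simp add: jacobi_poly_def jacobi_monic_def poly_sum poly_monom jacobi_coeff_def)

lemma coeff_jacobi_poly: "coeff (jacobi_poly a b n) k = (if k \<le> n then jacobi_coeff a b n k else 0)"
  by (simp add: jacobi_poly_def coeff_sum)

lemma degree_jacobi_poly_le: "degree (jacobi_poly a b n) \<le> n"
  by (rule degree_le) (simp add: coeff_jacobi_poly)

lemma coeff_jacobi_poly_self: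
  assumes "a + b \<notin> \<int>"
  shows "coeff (jacobi_poly a b n) n = 1"
proof -
  have "pochhammer (real n + a + b + 1) n \<noteq> 0"
  proof
    assume "pochhammer (real n + a + b + 1) n = 0"
    then obtain k where "real n + a + b + 1 = - real k"
      by (auto simp: pochhammer_eq_0_iff)
    then have "a + b = - real k - real n - 1"
      by simp
    with assms show False
      by (metis Ints_diff Ints_minus Ints_of_nat Ints_1)
  qed
  moreover have "pochhammer (- real n) n = (-1) ^ n * fact n"
    by (simp add: pochhammer_minus pochhammer_fact)
  ultimately show ?thesis
    by (simp add: coeff_jacobi_poly jacobi_coeff_def)
qed

lemma jacobi_coeff_Suc:
  assumes "k < n"
  shows "real (Suc k) * (real (Suc k) + a) * jacobi_coeff a b n (Suc k)
           = (jacobi_eigenvalue a b n - jacobi_eigenvalue a b k) * jacobi_coeff a b n k"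
proof -
  obtain m where m: "n - k = Suc m" and m': "n - Suc k = m"
    using assms by (metis Suc_diff_Suc)
  define Z where "Z = (-1) ^ n * pochhammer (a + real k + 2) m
     * pochhammer (- real n) k * pochhammer (real n + a + b + 1) k
     / (pochhammer (real n + a + b + 1) n * fact k)"
  have k: "jacobi_coeff a b n k = Z * (a + real k + 1)"
    unfolding jacobi_coeff_def Z_def m pochhammer_rec by (simp add: algebra_simps)
  have Suc_k: "jacobi_coeff a b n (Suc k)
      = Z * ((real k - real n) * (real n + a + b + 1 + real k)) / (real k + 1)"
    unfolding jacobi_coeff_def Z_def m' by (simp add: pochhammer_Suc field_simps)
  show ?thesis
    unfolding k Suc_k by (simp add: jacobi_eigenvalue_def field_simps)
qed

lemma jacobi_op_jacobi_poly:
  "jacobi_op a b (jacobi_poly a b n) = smult (jacobi_eigenvalue a b n) (jacobi_poly a b n)"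
proof (rule poly_eqI)
  fix k
  show "coeff (jacobi_op a b (jacobi_poly a b n)) k
      = coeff (smult (jacobi_eigenvalue a b n) (jacobi_poly a b n)) k"
    using jacobi_coeff_Suc[of k n a b]
    by (cases "k < n") (auto simp: coeff_jacobi_op coeff_jacobi_poly algebra_simps)
qed

text \<open>\<open>Q\<^sub>n = (J - \<mu>\<^sub>n)\<^sup>2 + 2 (J + \<mu>\<^sub>n) - ((a + b + 1)\<^sup>2 - 1)\<close>, chosen so that the double commutator
  identity makes \<open>Q\<^sub>n (t P\<^sub>n)\<close> a multiple of \<open>P\<^sub>n\<close>.\<close>

definition jacobi_annihilator :: "real \<Rightarrow> real \<Rightarrow> nat \<Rightarrow> real poly \<Rightarrow> real poly" where
  "jacobi_annihilator a b n p = jacobi_op a b (jacobi_op a b p)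
     - smult (2 * jacobi_eigenvalue a b n - 2) (jacobi_op a b p)
     + smult ((jacobi_eigenvalue a b n)\<^sup>2 + 2 * jacobi_eigenvalue a b n - (a + b + 1)\<^sup>2 + 1) p"

definition jacobi_annihilator_eigenvalue :: "real \<Rightarrow> real \<Rightarrow> nat \<Rightarrow> nat \<Rightarrow> real" where
  "jacobi_annihilator_eigenvalue a b n m = ((real m - real n)\<^sup>2 - 1) * ((real m + real n + a + b + 1)\<^sup>2 - 1)"

lemma jacobi_annihilator_linear:
  "jacobi_annihilator a b n (p - q) = jacobi_annihilator a b n p - jacobi_annihilator a b n q"
  "jacobi_annihilator a b n (smult c p) = smult c (jacobi_annihilator a b n p)"
  "jacobi_annihilator a b n 0 = 0"
  by (intro poly_eq_poly_eq_iff[THEN iffD1] ext;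
      simp add: jacobi_annihilator_def jacobi_op_linear algebra_simps)+

lemma jacobi_annihilator_jacobi_poly:
  "jacobi_annihilator a b n (jacobi_poly a b m)
     = smult (jacobi_annihilator_eigenvalue a b n m) (jacobi_poly a b m)"
  by (intro poly_eq_poly_eq_iff[THEN iffD1] ext)
     (simp add: jacobi_annihilator_def jacobi_annihilator_eigenvalue_def jacobi_op_jacobi_poly
      jacobi_op_linear jacobi_eigenvalue_def algebra_simps power2_eq_square)

lemma coeff_jacobi_annihilator_eq_0:
  assumes "\<forall>j\<ge>m. coeff p j = 0"
  shows "\<forall>j\<ge>m. coeff (jacobi_annihilator a b n p) j = 0"
  using assms coeff_jacobi_op_eq_0[OF coeff_jacobi_op_eq_0[OF assms]] coeff_jacobi_op_eq_0[OF assms]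
  by (simp add: jacobi_annihilator_def)

lemma coeff_jacobi_annihilator_top:
  assumes "\<forall>j>d. coeff p j = 0"
  shows "coeff (jacobi_annihilator a b n p) d = jacobi_annihilator_eigenvalue a b n d * coeff p d"
proof -
  have "\<forall>j\<ge>Suc d. coeff (jacobi_op a b p) j = 0"
    using assms by (intro coeff_jacobi_op_eq_0) auto
  then show ?thesis
    using assms
    by (simp add: jacobi_annihilator_def jacobi_annihilator_eigenvalue_def coeff_jacobi_op_top
        jacobi_eigenvalue_def algebra_simps power2_eq_square)
qed

lemma jacobi_annihilator_X_jacobi_poly:
  "jacobi_annihilator a b n ([:0, 1:] * jacobi_poly a b n)
     = smult (2 * jacobi_eigenvalue a b n - (a + 1) * (a + b)) (jacobi_poly a b n)"
proof (intro poly_eq_poly_eq_iff[THEN iffD1] ext)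
  fix t
  note commutator = jacobi_op_double_commutator[of a b "jacobi_poly a b n",
      unfolded jacobi_op_jacobi_poly jacobi_op_linear mult_smult_right]
  from arg_cong[OF commutator, of "\<lambda>q. poly q t"]
  show "poly (jacobi_annihilator a b n ([:0, 1:] * jacobi_poly a b n)) t
      = poly (smult (2 * jacobi_eigenvalue a b n - (a + 1) * (a + b)) (jacobi_poly a b n)) t"
    by (simp add: jacobi_annihilator_def jacobi_op_jacobi_poly jacobi_op_linear algebra_simps
        power2_eq_square)
qed

lemma jacobi_annihilator_eigenvalue_neighbours:
  "jacobi_annihilator_eigenvalue a b n (Suc n) = 0"
  "jacobi_annihilator_eigenvalue a b (Suc n) n = 0"
  by (simp_all add: jacobi_annihilator_eigenvalue_def)

lemma jacobi_annihilator_eigenvalue_nonzero: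
  assumes "a + b \<notin> \<int>" and "d + 2 \<le> n"
  shows "jacobi_annihilator_eigenvalue a b n d \<noteq> 0"
proof -
  have "real n - real d \<ge> 2"
    using assms(2) by linarith
  then have "(real d - real n)\<^sup>2 \<ge> 2\<^sup>2"
    unfolding power2_commute[of "real d"] by (rule power_mono) simp
  moreover have "real d + real n + a + b + 1 \<noteq> 1" "real d + real n + a + b + 1 \<noteq> -1"
  proof -
    have "a + b \<noteq> - real (d + n)" "a + b \<noteq> - real (d + n + 2)"
      using assms(1) by (metis Ints_minus Ints_of_nat)+
    then show "real d + real n + a + b + 1 \<noteq> 1" "real d + real n + a + b + 1 \<noteq> -1"
      by linarith+
  qed
  ultimately show ?thesis
    by (auto simp: jacobi_annihilator_eigenvalue_def power2_eq_1_iff)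
qed

lemma jacobi_annihilator_eq_0_imp_eq_0:
  assumes "a + b \<notin> \<int>" and "\<forall>j\<ge>n - 1. coeff r j = 0" and "jacobi_annihilator a b n r = 0"
  shows "r = 0"
proof (rule ccontr)
  assume "r \<noteq> 0"
  define d where "d = degree r"
  have "coeff r d \<noteq> 0"
    using \<open>r \<noteq> 0\<close> by (simp add: d_def)
  then have "d + 2 \<le> n"
    using assms(2) by (cases "n - 1 \<le> d") auto
  moreover have "jacobi_annihilator_eigenvalue a b n d * coeff r d = 0"
    using coeff_jacobi_annihilator_top[of d r a b n] assms(3) by (simp add: d_def coeff_eq_0)
  ultimately show False
    using jacobi_annihilator_eigenvalue_nonzero[OF assms(1)] \<open>coeff r d \<noteq> 0\<close> by simp
qed

lemma coeff_diff_smult_monic_eq_0: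
  fixes p q :: "'a::comm_ring_1 poly"
  assumes "\<forall>j>m. coeff p j = 0" and "degree q \<le> m" and "coeff q m = 1"
  shows "\<forall>j\<ge>m. coeff (p - smult (coeff p m) q) j = 0"
  using assms by (auto simp: le_less coeff_eq_0)

lemma X_jacobi_poly_remainder:
  assumes ab: "a + b \<notin> \<int>"
  shows "\<exists>w w'. \<forall>j\<ge>n - 1. coeff ([:0, 1:] * jacobi_poly a b n - jacobi_poly a b (Suc n)
           - smult w (jacobi_poly a b n) - (if n = 0 then 0 else smult w' (jacobi_poly a b (n - 1)))) j = 0"
proof -
  let ?P = "jacobi_poly a b"
  note monic = degree_jacobi_poly_le coeff_jacobi_poly_self[OF ab]
  define r0 where "r0 = [:0, 1:] * ?P n - ?P (Suc n)"
  define r1 where "r1 = r0 - smult (coeff r0 n) (?P n)"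
  have "degree ([:0, 1:] * ?P n) \<le> Suc n"
    using degree_mult_le[of "[:0, 1:]" "?P n"] degree_jacobi_poly_le[of a b n] by simp
  then have "\<forall>j>Suc n. coeff ([:0, 1:] * ?P n) j = 0"
    by (simp add: coeff_eq_0)
  from coeff_diff_smult_monic_eq_0[OF this monic]
  have "\<forall>j>n. coeff r0 j = 0"
    using coeff_jacobi_poly_self[OF ab, of n] unfolding r0_def by (simp add: Suc_le_eq)
  from coeff_diff_smult_monic_eq_0[OF this monic]
  have r1: "\<forall>j\<ge>n. coeff r1 j = 0"
    unfolding r1_def .
  have "\<forall>j\<ge>n - 1. coeff (r1 - (if n = 0 then 0 else smult (coeff r1 (n - 1)) (?P (n - 1)))) j = 0"
  proof (cases n)
    case 0
    then show ?thesis
      using r1 by simp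
  next
    case (Suc k)
    from r1 Suc have "\<forall>j>k. coeff r1 j = 0"
      by (simp add: Suc_le_eq)
    from coeff_diff_smult_monic_eq_0[OF this monic]
    show ?thesis
      unfolding Suc diff_Suc_1 if_not_P[OF nat.distinct(2)] .
  qed
  then show ?thesis
    unfolding r1_def r0_def by blast
qed

lemma jacobi_poly_three_term:
  assumes ab: "a + b \<notin> \<int>"
  shows "\<exists>w w'. [:0, 1:] * jacobi_poly a b n = jacobi_poly a b (Suc n) + smult w (jacobi_poly a b n)
            + (if n = 0 then 0 else smult w' (jacobi_poly a b (n - 1)))"
proof -
  let ?P = "jacobi_poly a b" and ?Q = "jacobi_annihilator a b n"
  obtain w w' where low: "\<forall>j\<ge>n - 1. coeff ([:0, 1:] * ?P n - ?P (Suc n) - smult w (?P n)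
      - (if n = 0 then 0 else smult w' (?P (n - 1)))) j = 0"
    using X_jacobi_poly_remainder[OF ab, of n] by blast
  define r where "r = [:0, 1:] * ?P n - ?P (Suc n) - smult w (?P n)
      - (if n = 0 then 0 else smult w' (?P (n - 1)))"
  have r_low: "\<forall>j\<ge>n - 1. coeff r j = 0"
    using low unfolding r_def .
  define K where "K = 2 * jacobi_eigenvalue a b n - (a + 1) * (a + b)
                        - w * jacobi_annihilator_eigenvalue a b n n"
  have "?Q r = ?Q ([:0, 1:] * ?P n) - ?Q (?P (Suc n)) - ?Q (smult w (?P n))
      - ?Q (if n = 0 then 0 else smult w' (?P (n - 1)))"
    unfolding r_def jacobi_annihilator_linear(1) ..
  also have "\<dots> = smult K (?P n)"
    unfolding jacobi_annihilator_X_jacobi_poly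
    by (cases n)
       (simp_all add: K_def jacobi_annihilator_linear jacobi_annihilator_jacobi_poly
        jacobi_annihilator_eigenvalue_neighbours smult_diff_left)
  finally have "?Q r = smult K (?P n)" .
  moreover have "coeff (?Q r) n = 0"
    using coeff_jacobi_annihilator_eq_0[OF r_low] by simp
  ultimately have "?Q r = 0"
    using coeff_jacobi_poly_self[OF ab, of n] by simp
  then have "r = 0"
    by (rule jacobi_annihilator_eq_0_imp_eq_0[OF ab r_low])
  then show ?thesis
    unfolding r_def diff_diff_eq right_minus_eq by blast
qed

lemma inversion_Lop_eq_jacobi_op:
  fixes s \<alpha> \<beta> a :: real
  defines "c \<equiv> (2 * s + \<alpha> + \<beta> + 1 + a) / 2"
  shows "inversion_Lop \<alpha> \<beta> s p = smult (- 1 - c) ([:0, 1:] * jacobi_op a \<beta> p)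
     + smult c (jacobi_op a \<beta> ([:0, 1:] * p)) + smult (s * (s + \<alpha>) + c * (a + \<beta> + 2)) ([:0, 1:] * p)
     + smult (- s * (s + \<alpha> + \<beta> + 1) - c * (a + 1)) p"
  by (intro poly_eq_poly_eq_iff[THEN iffD1] ext)
     (simp add: inversion_Lop_def inversion_deriv_def jacobi_op_def pderiv_simps c_def field_simps)

lemma inversion_Mop_eq_jacobi_op:
  assumes "\<tau>1 = (1 - \<nu>1 + \<nu>2) / 2" and "\<tau>2 = (1 + \<nu>1 - \<nu>2) / 2"
    and "\<tau>3 = \<nu>1 * \<nu>2 + (\<alpha> + \<beta>) * (\<nu>1 + \<nu>2 - 1) / 2"
  shows "inversion_Mop \<alpha> \<beta> \<tau>0 \<tau>1 \<tau>2 \<tau>3 (\<nu>2 - 1) p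
     = smult (\<tau>0 + \<nu>1 * \<nu>2 + (\<alpha> - 1) * (\<nu>1 + \<nu>2 - 1) / 2) ([:0, 1:] * p)
       - [:0, 1:] * jacobi_op (- \<alpha> - \<beta> - \<nu>1 - \<nu>2) \<beta> p"
  unfolding assms
  by (intro poly_eq_poly_eq_iff[THEN iffD1] ext)
     (simp add: inversion_Mop_def inversion_Lop_def inversion_deriv_def jacobi_op_def pderiv_simps
      field_simps)

lemma Mop_jacobi_eigenfunction:
  assumes "\<tau>1 = (1 - \<nu>1 + \<nu>2) / 2" and "\<tau>2 = (1 + \<nu>1 - \<nu>2) / 2"
    and "\<tau>3 = \<nu>1 * \<nu>2 + (\<alpha> + \<beta>) * (\<nu>1 + \<nu>2 - 1) / 2"
    and f: "\<And>y. y > 0 \<Longrightarrow> f y = y powr (\<nu>2 - 1) * poly (jacobi_poly (- \<alpha> - \<beta> - \<nu>1 - \<nu>2) \<beta> n) (1 / y)"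
    and x: "x > 0"
  shows "Mop \<alpha> \<beta> \<tau>0 \<tau>1 \<tau>2 \<tau>3 f x
     = (real n * (real n - 1) + (2 - \<nu>1 - \<nu>2 - \<alpha>) * real n + \<tau>0 + \<nu>1 * \<nu>2
        + (\<alpha> - 1) * (\<nu>1 + \<nu>2 - 1) / 2) * f x"
proof -
  have "Mop \<alpha> \<beta> \<tau>0 \<tau>1 \<tau>2 \<tau>3 f x = x powr (\<nu>2 - 1 + 1)
      * poly (inversion_Mop \<alpha> \<beta> \<tau>0 \<tau>1 \<tau>2 \<tau>3 (\<nu>2 - 1) (jacobi_poly (- \<alpha> - \<beta> - \<nu>1 - \<nu>2) \<beta> n)) (1 / x)"
    by (rule Mop_powr_poly_inverse[OF f x])
  also have "\<dots> = (real n * (real n - 1) + (2 - \<nu>1 - \<nu>2 - \<alpha>) * real n + \<tau>0 + \<nu>1 * \<nu>2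
        + (\<alpha> - 1) * (\<nu>1 + \<nu>2 - 1) / 2) * f x"
    unfolding inversion_Mop_eq_jacobi_op[OF assms(1-3)] f[OF x]
    using x by (simp add: jacobi_op_jacobi_poly jacobi_eigenvalue_def powr_diff field_simps)
  finally show ?thesis .
qed

lemma inversion_Lop_jacobi_poly_tridiagonal:
  assumes "a + \<beta> \<notin> \<int>"
  shows "\<exists>\<xi> \<eta> \<zeta>. inversion_Lop \<alpha> \<beta> s (jacobi_poly a \<beta> n) = smult \<xi> (jacobi_poly a \<beta> (Suc n))
     + smult \<eta> (jacobi_poly a \<beta> n) + (if n = 0 then 0 else smult \<zeta> (jacobi_poly a \<beta> (n - 1)))"
proof -
  let ?P = "jacobi_poly a \<beta>" and ?\<mu> = "jacobi_eigenvalue a \<beta>"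
  obtain w w' where rec: "[:0, 1:] * ?P n
      = ?P (Suc n) + smult w (?P n) + (if n = 0 then 0 else smult w' (?P (n - 1)))"
    using jacobi_poly_three_term[OF assms] by blast
  define c where "c = (2 * s + \<alpha> + \<beta> + 1 + a) / 2"
  define d where "d = (- 1 - c) * ?\<mu> n + s * (s + \<alpha>) + c * (a + \<beta> + 2)"
  have "inversion_Lop \<alpha> \<beta> s (?P n) = smult d ([:0, 1:] * ?P n) + smult c (jacobi_op a \<beta> ([:0, 1:] * ?P n))
      + smult (- s * (s + \<alpha> + \<beta> + 1) - c * (a + 1)) (?P n)"
    unfolding inversion_Lop_eq_jacobi_op[where a = a] jacobi_op_jacobi_poly d_def c_def
    by (intro poly_eq_poly_eq_iff[THEN iffD1] ext) (simp add: field_simps)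
  also have "\<dots> = smult (d + c * ?\<mu> (Suc n)) (?P (Suc n))
      + smult ((d + c * ?\<mu> n) * w - s * (s + \<alpha> + \<beta> + 1) - c * (a + 1)) (?P n)
      + (if n = 0 then 0 else smult ((d + c * ?\<mu> (n - 1)) * w') (?P (n - 1)))"
    unfolding rec
    by (intro poly_eq_poly_eq_iff[THEN iffD1] ext)
       (simp add: jacobi_op_linear jacobi_op_jacobi_poly algebra_simps)
  finally show ?thesis
    by blast
qed

lemma Lop_jacobi_tridiagonal:
  assumes "a + \<beta> \<notin> \<int>"
    and f: "\<And>m y. y > 0 \<Longrightarrow> f m y = y powr s * poly (jacobi_poly a \<beta> m) (1 / y)"
  shows "\<exists>\<xi> \<eta> \<zeta>. \<forall>x>0. Lop \<alpha> \<beta> (f n) x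
           = \<xi> * f (Suc n) x + \<eta> * f n x + \<zeta> * (if n = 0 then 0 else f (n - 1) x)"
proof -
  obtain \<xi> \<eta> \<zeta> where tri: "inversion_Lop \<alpha> \<beta> s (jacobi_poly a \<beta> n) = smult \<xi> (jacobi_poly a \<beta> (Suc n))
     + smult \<eta> (jacobi_poly a \<beta> n) + (if n = 0 then 0 else smult \<zeta> (jacobi_poly a \<beta> (n - 1)))"
    using inversion_Lop_jacobi_poly_tridiagonal[OF assms(1)] by blast
  have "Lop \<alpha> \<beta> (f n) x = \<xi> * f (Suc n) x + \<eta> * f n x + \<zeta> * (if n = 0 then 0 else f (n - 1) x)"
    if "x > 0" for x
  proof -
    have "Lop \<alpha> \<beta> (f n) x = x powr s * poly (inversion_Lop \<alpha> \<beta> s (jacobi_poly a \<beta> n)) (1 / x)"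
      using Lop_powr_poly_inverse f that by blast
    then show ?thesis
      unfolding tri using f that by (simp add: algebra_simps)
  qed
  then show ?thesis
    by blast
qed

theorem mainTheorem5:
  fixes \<alpha> \<beta> \<nu>1 \<nu>2 \<tau>0 \<tau>1 \<tau>2 \<tau>3 :: real
  assumes "\<tau>1 + \<tau>2 = 1"
    and "\<tau>2 = (1 + \<nu>1 - \<nu>2) / 2"
    and "\<tau>3 = \<nu>1 * \<nu>2 + (\<alpha> + \<beta>) * (\<nu>1 + \<nu>2 - 1) / 2"
    and "\<alpha> + \<nu>1 + \<nu>2 \<notin> \<int>"
  defines "\<psi> \<equiv> (\<lambda>(n::nat) (x::real).
              x powr (\<nu>2 - 1) * jacobi_monic (- \<alpha> - \<beta> - \<nu>1 - \<nu>2) \<beta> n (1 / x))"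
  shows "(\<forall>n::nat. \<forall>x\<in>{0<..<1::real}.
            Mop \<alpha> \<beta> \<tau>0 \<tau>1 \<tau>2 \<tau>3 (\<psi> n) x
              = (real n * (real n - 1) + (2 - \<nu>1 - \<nu>2 - \<alpha>) * real n + \<tau>0 + \<nu>1 * \<nu>2
                 + (\<alpha> - 1) * (\<nu>1 + \<nu>2 - 1) / 2) * \<psi> n x)
       \<and> (\<forall>n::nat. \<exists>\<xi> \<eta> \<zeta> :: real. \<forall>x\<in>{0<..<1::real}.
            Lop \<alpha> \<beta> (\<psi> n) x
              = \<xi> * \<psi> (Suc n) x + \<eta> * \<psi> n x + \<zeta> * (if n = 0 then 0 else \<psi> (n - 1) x))"
proof -
  have \<psi>: "\<psi> m y = y powr (\<nu>2 - 1) * poly (jacobi_poly (- \<alpha> - \<beta> - \<nu>1 - \<nu>2) \<beta> m) (1 / y)" for m y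
    by (simp add: \<psi>_def poly_jacobi_poly)
  have nonint: "- \<alpha> - \<beta> - \<nu>1 - \<nu>2 + \<beta> \<notin> \<int>"
    using assms(4) Ints_minus[of "- \<alpha> - \<beta> - \<nu>1 - \<nu>2 + \<beta>"] by (auto simp: algebra_simps)
  have "\<tau>1 = (1 - \<nu>1 + \<nu>2) / 2"
    using assms(1,2) by (simp add: field_simps)
  note eigen = Mop_jacobi_eigenfunction[OF this assms(2,3) \<psi>]
  have tri: "\<exists>\<xi> \<eta> \<zeta>. \<forall>x\<in>{0<..<1::real}.
      Lop \<alpha> \<beta> (\<psi> n) x = \<xi> * \<psi> (Suc n) x + \<eta> * \<psi> n x + \<zeta> * (if n = 0 then 0 else \<psi> (n - 1) x)" for n
  proof -
    obtain \<xi> \<eta> \<zeta> where "\<forall>x>0. Lop \<alpha> \<beta> (\<psi> n) x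
        = \<xi> * \<psi> (Suc n) x + \<eta> * \<psi> n x + \<zeta> * (if n = 0 then 0 else \<psi> (n - 1) x)"
      using Lop_jacobi_tridiagonal[OF nonint \<psi>] by blast
    then show ?thesis
      by auto
  qed
  show ?thesis
    using eigen tri by simp
qed

end
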